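(* Let $N$, $\epsilon$ and $r_0$ be as described in the context, and let $\psi$ be a solution of $\Box_g\psi=0$ with compactly supported data. Let $\tau_0<\tau_1$ and $\tilde r_0<\tilde r_1<r_0$. Set \[ g(\bar r)=\int_{\tau_0}^{\tau_1}J^N_\mu(\psi)n^\mu_{\mathcal S_{\bar r}}\,e^{a\bar r}\,d\tau, \] and let $r_\star\in(\tilde r_0,\tilde r_1)$ satisfy $g(r_\star)=\frac1{\tilde r_1-\tilde r_0}\int_{\tilde r_0}^{\tilde r_1}g(\bar r)\,d\bar r$. Define \[ \mathcal R_{III}=D^+(\Sigma^{r_\star}_{\tau_0})\cap D^-(\Sigma^{r_\star}_{\tau_1}),\qquad \mathcal R_{III_A}=\mathcal R_{III}\cap\{r\le r_\star\}. \] Then there is a constant $C$ such that \[ \int_{\mathcal R_{III_A}}J^N_\mu(\psi)n^\mu_{\mathcal C_v}\,\mathrm{dVol}\le C\int_{\Sigma_{\tau_0}}J^N_\mu(\psi)n^\mu_{\Sigma_{\tau_0}}\,\mathrm{dVol}_{\Sigma_{\tau_0}}. \]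
   Context: Fix $a>0$. The Rindler spacetime is $\mathcal M=\mathbb R^2_{(\tau,r)}$ with metric $g=e^{2ar}(-d\tau^2+dr^2)$. Null coordinates are $u=\tau-r$, $v=\tau+r$, so $g=-e^{a(v-u)}du\,dv$. Regular coordinates $U=-a^{-1}e^{-au}$, $V=a^{-1}e^{av}$ give $g=-dU\,dV$; compact support of data is meant with respect to $(U,V)$. The spacetime volume form is $\mathrm{dVol}=e^{2ar}d\tau\,dr$. $D^\pm$ denote the future and past domains of dependence. Stress-energy tensor: $T_{\mu\nu}(\psi)=\partial_\mu\psi\partial_\nu\psi-\tfrac12g_{\mu\nu}g^{\alpha\beta}\partial_\alpha\psi\partial_\beta\psi$. For a vector field $V$: $J^V_\mu=T_{\mu\nu}V^\nu$ and $K^V=\tfrac12(\mathcal L_Vg)^{\mu\nu}T_{\mu\nu}$. Normals: - on $\Sigma_\tau=\{\tau=\text{const}\}$: $n=e^{-ar}\partial_\tau$, with $\mathrm{dVol}=e^{ar}dr$; - on $\mathcal S_{\bar r}=\{r=\bar r\}$: $n=e^{-ar}\partial_r$; - on $\mathcal C_u=\{u=\text{const}\}$: $n=2e^{-a(v-u)}\partial_v$; - on $\mathcal C_v=\{v=\text{const}\}$: $n=2e^{-a(v-u)}\partial_u$. Foliation: $\Sigma^{r_1}_{\tau_0}=\{\tau=\tau_0,\ r\ge r_1\}\cup\{v=\tau_0+r_1,\ u\ge\tau_0-r_1\}$. The vector field $N$: fix $\epsilon>0$. $N$ is a future-directed timelike vector field with $[\partial_\tau,N]=0$, for which there exist $r_0<R$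 and constants $c,C,\tilde C>0$ such that: - $(a-\epsilon)J^N_\mu n^\mu_{\mathcal C_v}\le K^N$ for $r\le r_0$; - $cJ^{\partial_\tau}_\mu n^\mu_{\Sigma_\tau}\le J^N_\mu n^\mu_{\Sigma_\tau}\le CJ^{\partial_\tau}_\mu n^\mu_{\Sigma_\tau}$ for $r_0\le r\le R$; - $J^N_\mu n^\mu_{\mathcal C_u}=J^{\partial_\tau}_\mu n^\mu_{\mathcal C_u}$ for $r\ge R$; - $|K^N|\le\tilde CJ^{\partial_\tau}_\mu n^\mu_{\Sigma_\tau}$ for $r_0\le r\le R$. *)

theory Defs
  imports "HOL-Analysis.Analysis"
begin

text \<open>Rindler spacetime M = R^2 with coordinates (tau, r); index 0 = tau, index 1 = r.
  Scalar functions on M are curried functions f tau r; vector fields are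
  functions X tau r mu giving the coordinate components X^mu (mu < 2).\<close>

definition eta :: "nat \<Rightarrow> nat \<Rightarrow> real" where
  "eta \<mu> \<nu> = (if \<mu> = \<nu> then (if \<mu> = 0 then -1 else 1) else 0)"

definition gmet :: "real \<Rightarrow> real \<Rightarrow> nat \<Rightarrow> nat \<Rightarrow> real" where
  "gmet a r \<mu> \<nu> = exp (2*a*r) * eta \<mu> \<nu>"

definition ginv :: "real \<Rightarrow> real \<Rightarrow> nat \<Rightarrow> nat \<Rightarrow> real" where
  "ginv a r \<mu> \<nu> = exp (-2*a*r) * eta \<mu> \<nu>"

definition gdet :: "real \<Rightarrow> real \<Rightarrow> real" where
  "gdet a r = gmet a r 0 0 * gmet a r 1 1 - gmet a r 0 1 * gmet a r 1 0"

definition pd :: "(real \<Rightarrow> real \<Rightarrow> real) \<Rightarrow> nat \<Rightarrow> real \<Rightarrow> real \<Rightarrow> real" where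
  "pd f \<mu> t s = (if \<mu> = 0 then deriv (\<lambda>x. f x s) t else deriv (\<lambda>y. f t y) s)"

definition has_pd :: "(real \<Rightarrow> real \<Rightarrow> real) \<Rightarrow> nat \<Rightarrow> real \<Rightarrow> real \<Rightarrow> bool" where
  "has_pd f \<mu> t s = (if \<mu> = 0 then (\<lambda>x. f x s) differentiable (at t)
                                  else (\<lambda>y. f t y) differentiable (at s))"

definition cont2 :: "(real \<Rightarrow> real \<Rightarrow> real) \<Rightarrow> bool" where
  "cont2 f = continuous_on UNIV (\<lambda>p::real \<times> real. f (fst p) (snd p))"

definition C1_fun :: "(real \<Rightarrow> real \<Rightarrow> real) \<Rightarrow> bool" where
  "C1_fun f = (cont2 f \<and> (\<forall>\<mu><2. (\<forall>t s. has_pd f \<mu> t s) \<and> cont2 (pd f \<mu>)))"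

definition C2_fun :: "(real \<Rightarrow> real \<Rightarrow> real) \<Rightarrow> bool" where
  "C2_fun f = (C1_fun f \<and> (\<forall>\<mu><2. C1_fun (pd f \<mu>)))"

definition C1_field :: "(real \<Rightarrow> real \<Rightarrow> nat \<Rightarrow> real) \<Rightarrow> bool" where
  "C1_field X = (\<forall>\<mu><2. C1_fun (\<lambda>t s. X t s \<mu>))"

definition box_g :: "real \<Rightarrow> (real \<Rightarrow> real \<Rightarrow> real) \<Rightarrow> real \<Rightarrow> real \<Rightarrow> real" where
  "box_g a \<psi> t s = (1 / sqrt \<bar>gdet a s\<bar>) *
     (\<Sum>\<mu><2. pd (\<lambda>t' s'. sqrt \<bar>gdet a s'\<bar> * (\<Sum>\<nu><2. ginv a s' \<mu> \<nu> * pd \<psi> \<nu> t' s')) \<mu> t s)"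

definition gprod :: "real \<Rightarrow> real \<Rightarrow> (nat \<Rightarrow> real) \<Rightarrow> (nat \<Rightarrow> real) \<Rightarrow> real" where
  "gprod a r X Y = (\<Sum>\<mu><2. \<Sum>\<nu><2. gmet a r \<mu> \<nu> * X \<mu> * Y \<nu>)"

definition Tse :: "real \<Rightarrow> (real \<Rightarrow> real \<Rightarrow> real) \<Rightarrow> real \<Rightarrow> real \<Rightarrow> nat \<Rightarrow> nat \<Rightarrow> real" where
  "Tse a \<psi> t s \<mu> \<nu> = pd \<psi> \<mu> t s * pd \<psi> \<nu> t s
     - 1/2 * gmet a s \<mu> \<nu> * (\<Sum>\<alpha><2. \<Sum>\<beta><2. ginv a s \<alpha> \<beta> * pd \<psi> \<alpha> t s * pd \<psi> \<beta> t s)"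

definition Jcur :: "real \<Rightarrow> (real \<Rightarrow> real \<Rightarrow> real) \<Rightarrow> (real \<Rightarrow> real \<Rightarrow> nat \<Rightarrow> real)
     \<Rightarrow> real \<Rightarrow> real \<Rightarrow> nat \<Rightarrow> real" where
  "Jcur a \<psi> V t s \<mu> = (\<Sum>\<nu><2. Tse a \<psi> t s \<mu> \<nu> * V t s \<nu>)"

definition Jn :: "real \<Rightarrow> (real \<Rightarrow> real \<Rightarrow> real) \<Rightarrow> (real \<Rightarrow> real \<Rightarrow> nat \<Rightarrow> real)
     \<Rightarrow> (real \<Rightarrow> real \<Rightarrow> nat \<Rightarrow> real) \<Rightarrow> real \<Rightarrow> real \<Rightarrow> real" where
  "Jn a \<psi> V n t s = (\<Sum>\<mu><2. Jcur a \<psi> V t s \<mu> * n t s \<mu>)"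

definition deform :: "real \<Rightarrow> (real \<Rightarrow> real \<Rightarrow> nat \<Rightarrow> real) \<Rightarrow> real \<Rightarrow> real \<Rightarrow> nat \<Rightarrow> nat \<Rightarrow> real" where
  "deform a V t s \<mu> \<nu> =
     (\<Sum>\<alpha><2. V t s \<alpha> * pd (\<lambda>t' s'. gmet a s' \<mu> \<nu>) \<alpha> t s)
   + (\<Sum>\<alpha><2. gmet a s \<alpha> \<nu> * pd (\<lambda>t' s'. V t' s' \<alpha>) \<mu> t s)
   + (\<Sum>\<alpha><2. gmet a s \<mu> \<alpha> * pd (\<lambda>t' s'. V t' s' \<alpha>) \<nu> t s)"

definition Kcur :: "real \<Rightarrow> (real \<Rightarrow> real \<Rightarrow> real) \<Rightarrow> (real \<Rightarrow> real \<Rightarrow> nat \<Rightarrow> real)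
     \<Rightarrow> real \<Rightarrow> real \<Rightarrow> real" where
  "Kcur a \<psi> V t s = 1/2 * (\<Sum>\<mu><2. \<Sum>\<nu><2.
      (\<Sum>\<alpha><2. \<Sum>\<beta><2. ginv a s \<mu> \<alpha> * ginv a s \<nu> \<beta> * deform a V t s \<alpha> \<beta>)
      * Tse a \<psi> t s \<mu> \<nu>)"

definition lie_bracket :: "(real \<Rightarrow> real \<Rightarrow> nat \<Rightarrow> real) \<Rightarrow> (real \<Rightarrow> real \<Rightarrow> nat \<Rightarrow> real)
     \<Rightarrow> real \<Rightarrow> real \<Rightarrow> nat \<Rightarrow> real" where
  "lie_bracket X Y t s \<mu> =
     (\<Sum>\<nu><2. X t s \<nu> * pd (\<lambda>t' s'. Y t' s' \<mu>) \<nu> t s - Y t s \<nu> * pd (\<lambda>t' s'. X t' s' \<mu>) \<nu> t s)"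

definition d_tau :: "real \<Rightarrow> real \<Rightarrow> nat \<Rightarrow> real" where
  "d_tau t s \<mu> = (if \<mu> = 0 then 1 else 0)"

definition d_r :: "real \<Rightarrow> real \<Rightarrow> nat \<Rightarrow> real" where
  "d_r t s \<mu> = (if \<mu> = 1 then 1 else 0)"

definition ucoord :: "real \<Rightarrow> real \<Rightarrow> real" where "ucoord t s = t - s"
definition vcoord :: "real \<Rightarrow> real \<Rightarrow> real" where "vcoord t s = t + s"
definition Ucoord :: "real \<Rightarrow> real \<Rightarrow> real \<Rightarrow> real" where
  "Ucoord a t s = - (1/a) * exp (- a * ucoord t s)"
definition Vcoord :: "real \<Rightarrow> real \<Rightarrow> real \<Rightarrow> real" where
  "Vcoord a t s = (1/a) * exp (a * vcoord t s)"

definition d_u :: "real \<Rightarrow> real \<Rightarrow> nat \<Rightarrow> real" where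
  "d_u t s \<mu> = (if \<mu> = 0 then 1/2 else if \<mu> = 1 then -1/2 else 0)"
definition d_v :: "real \<Rightarrow> real \<Rightarrow> nat \<Rightarrow> real" where
  "d_v t s \<mu> = (if \<mu> = 0 then 1/2 else if \<mu> = 1 then 1/2 else 0)"

definition n_Sigma :: "real \<Rightarrow> real \<Rightarrow> real \<Rightarrow> nat \<Rightarrow> real" where
  "n_Sigma a t s \<mu> = exp (- a * s) * d_tau t s \<mu>"
definition n_S :: "real \<Rightarrow> real \<Rightarrow> real \<Rightarrow> nat \<Rightarrow> real" where
  "n_S a t s \<mu> = exp (- a * s) * d_r t s \<mu>"
definition n_Cu :: "real \<Rightarrow> real \<Rightarrow> real \<Rightarrow> nat \<Rightarrow> real" where
  "n_Cu a t s \<mu> = 2 * exp (- a * (vcoord t s - ucoord t s)) * d_v t s \<mu>"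
definition n_Cv :: "real \<Rightarrow> real \<Rightarrow> real \<Rightarrow> nat \<Rightarrow> real" where
  "n_Cv a t s \<mu> = 2 * exp (- a * (vcoord t s - ucoord t s)) * d_u t s \<mu>"

definition future_timelike :: "real \<Rightarrow> (real \<Rightarrow> real \<Rightarrow> nat \<Rightarrow> real) \<Rightarrow> bool" where
  "future_timelike a X = (\<forall>t s. gprod a s (X t s) (X t s) < 0 \<and> gprod a s (X t s) (d_tau t s) < 0)"

text \<open>Points of M are pairs (tau, r).\<close>
definition causal_curve_from :: "real \<Rightarrow> bool \<Rightarrow> (real \<Rightarrow> real \<times> real) \<Rightarrow> (real \<times> real) \<Rightarrow> bool" where
  "causal_curve_from a fut \<gamma> p =
    (\<gamma> 0 = p \<and>
     (\<exists>\<gamma>'. continuous_on {0..} \<gamma>' \<and>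
       (\<forall>t\<ge>0. (\<gamma> has_vector_derivative \<gamma>' t) (at t within {0..}) \<and>
          \<gamma>' t \<noteq> 0 \<and>
          gprod a (snd (\<gamma> t)) (\<lambda>\<mu>. if \<mu> = 0 then fst (\<gamma>' t) else snd (\<gamma>' t))
                              (\<lambda>\<mu>. if \<mu> = 0 then fst (\<gamma>' t) else snd (\<gamma>' t)) \<le> 0 \<and>
          (if fut then fst (\<gamma>' t) > 0 else fst (\<gamma>' t) < 0))))"

definition inextendible :: "(real \<Rightarrow> real \<times> real) \<Rightarrow> bool" where
  "inextendible \<gamma> = (\<not> (\<exists>q. (\<gamma> \<longlongrightarrow> q) at_top))"

definition Dplus :: "real \<Rightarrow> (real \<times> real) set \<Rightarrow> (real \<times> real) set" where
  "Dplus a S = {p. \<forall>\<gamma>. causal_curve_from a False \<gamma> p \<and> inextendible \<gamma> \<longrightarrow> (\<exists>t\<ge>0. \<gamma> t \<in> S)}"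

definition Dminus :: "real \<Rightarrow> (real \<times> real) set \<Rightarrow> (real \<times> real) set" where
  "Dminus a S = {p. \<forall>\<gamma>. causal_curve_from a True \<gamma> p \<and> inextendible \<gamma> \<longrightarrow> (\<exists>t\<ge>0. \<gamma> t \<in> S)}"

definition Sigma_hyp :: "real \<Rightarrow> real \<Rightarrow> (real \<times> real) set" where
  "Sigma_hyp \<tau>0 r1 = {(t, s). t = \<tau>0 \<and> s \<ge> r1}
      \<union> {(t, s). vcoord t s = \<tau>0 + r1 \<and> ucoord t s \<ge> \<tau>0 - r1}"

end

theory Submission
  imports Defs
begin

text \<open>In null coordinates the wave equation is \<open>\<partial>\<^sub>u\<partial>\<^sub>v \<psi> = 0\<close>, so \<open>\<partial>\<^sub>u \<psi>\<close> is
  constant along every null line \<open>u = const\<close>, and the flux density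
  \<open>J\<^sup>N\<^sub>\<mu> n\<^sup>\<mu>\<^sub>C\<^sub>v\<close> is, up to the conformal factor, \<open>N\<^sup>u (\<partial>\<^sub>u \<psi>)\<^sup>2\<close>.
  A past-directed line \<open>r = const\<close> shows that every point of \<open>R\<^sub>I\<^sub>I\<^sub>I\<^sub>A\<close> lies to the
  future of the null line \<open>v = \<tau>\<^sub>0 + r\<^sub>\<star>\<close>; hence the region is covered by segments of the
  lines \<open>u = const\<close> issuing from \<open>\<Sigma>\<^sub>\<tau>\<^sub>0\<close>.  Testing the red-shift inequality with the
  function \<open>u\<close> itself gives \<open>\<partial>\<^sub>r N\<^sup>u \<le> -2(a - \<epsilon>) N\<^sup>u\<close> for \<open>r \<le> r\<^sub>0\<close>, so \<open>N\<^sup>u\<close> decays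
  exponentially along each segment.  Integrating along the segments therefore costs only a
  factor \<open>1/(2(a - \<epsilon>))\<close>, and the remaining integral of \<open>N\<^sup>u (\<partial>\<^sub>u \<psi>)\<^sup>2\<close> over
  \<open>\<Sigma>\<^sub>\<tau>\<^sub>0\<close> is bounded by the \<open>N\<close>-energy there; the constant is \<open>C = 1/(a - \<epsilon>)\<close>.\<close>

lemma C1_funD:
  assumes "C1_fun f"
  shows "cont2 f" "cont2 (pd f 0)" "cont2 (pd f 1)"
    and "((\<lambda>x. f x s) has_real_derivative pd f 0 t s) (at t)"
    and "((\<lambda>y. f t y) has_real_derivative pd f 1 t s) (at s)"
proof -
  have pds: "\<forall>\<mu><2. (\<forall>t s. has_pd f \<mu> t s) \<and> cont2 (pd f \<mu>)"
    using assms unfolding C1_fun_def by auto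
  show "cont2 f" using assms unfolding C1_fun_def by auto
  show "cont2 (pd f 0)" "cont2 (pd f 1)" using pds by auto
  have "has_pd f 0 t s" "has_pd f 1 t s" using pds by auto
  then show "((\<lambda>x. f x s) has_real_derivative pd f 0 t s) (at t)"
    "((\<lambda>y. f t y) has_real_derivative pd f 1 t s) (at s)"
    unfolding has_pd_def pd_def by (auto simp: DERIV_deriv_iff_real_differentiable)
qed

lemma C2_funD:
  assumes "C2_fun f"
  shows "C1_fun f" "C1_fun (pd f 0)" "C1_fun (pd f 1)"
  using assms unfolding C2_fun_def by auto

lemma C1_field_component: "C1_field X \<Longrightarrow> \<mu> < 2 \<Longrightarrow> C1_fun (\<lambda>t s. X t s \<mu>)"
  unfolding C1_field_def by auto

lemma continuous_on_cont2_slice: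
  assumes "cont2 f"
  shows "continuous_on UNIV (\<lambda>s. f t s)"
proof -
  have "continuous_on UNIV (\<lambda>s::real. (t, s))"
    by (intro continuous_intros)
  from continuous_on_compose2[OF assms[unfolded cont2_def] this] show ?thesis
    by simp
qed

lemma sum_lessThan_2: "(\<Sum>i<(2::nat). f i) = f 0 + f 1"
  by (simp add: numeral_2_eq_2)

lemma Jn_n_Cv_eq:
  "Jn a \<phi> X (n_Cv a) t s * exp (2 * a * s) =
     (X t s 0 - X t s 1) * (pd \<phi> 0 t s - pd \<phi> 1 t s)\<^sup>2 / 2"
  unfolding Jn_def Jcur_def Tse_def n_Cv_def gmet_def ginv_def eta_def d_u_def vcoord_def ucoord_def
  by (simp add: sum_lessThan_2 power2_eq_square exp_minus field_simps)

lemma Jn_n_Sigma_eq: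
  "Jn a \<phi> X (n_Sigma a) t s * exp (a * s) =
     ((X t s 0 - X t s 1) * (pd \<phi> 0 t s - pd \<phi> 1 t s)\<^sup>2
    + (X t s 0 + X t s 1) * (pd \<phi> 0 t s + pd \<phi> 1 t s)\<^sup>2) / 4"
  unfolding Jn_def Jcur_def Tse_def n_Sigma_def gmet_def ginv_def eta_def d_tau_def
  by (simp add: sum_lessThan_2 power2_eq_square exp_minus field_simps)

lemma pd_gmet_tau: "pd (\<lambda>t' s'. gmet a s' \<mu> \<nu>) 0 t s = 0"
  unfolding pd_def by simp

lemma pd_gmet_r: "pd (\<lambda>t' s'. gmet a s' \<mu> \<nu>) 1 t s = 2 * a * exp (2 * a * s) * eta \<mu> \<nu>"
  unfolding pd_def gmet_def
  by (auto intro!: DERIV_imp_deriv derivative_eq_intros)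

lemma Kcur_eq_if_pd_tau_eq_0:
  assumes "pd (\<lambda>t' s'. X t' s' 0) 0 t s = 0" "pd (\<lambda>t' s'. X t' s' 1) 0 t s = 0"
  shows "Kcur a \<phi> X t s = exp (-2 * a * s) *
     (pd (\<lambda>t' s'. X t' s' 0) 1 t s * pd \<phi> 0 t s * pd \<phi> 1 t s
      + pd (\<lambda>t' s'. X t' s' 1) 1 t s * ((pd \<phi> 0 t s)\<^sup>2 + (pd \<phi> 1 t s)\<^sup>2) / 2)"
  using assms unfolding Kcur_def deform_def Tse_def
  by (simp add: sum_lessThan_2 pd_gmet_tau pd_gmet_r[unfolded One_nat_def])
     (simp add: gmet_def ginv_def eta_def power2_eq_square exp_minus field_simps)

section \<open>The red-shift vector field\<close>

lemma pd_tau_eq_0_if_commutes_d_tau: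
  assumes "\<forall>t s. \<forall>\<mu><2. lie_bracket d_tau X t s \<mu> = 0" "\<mu> < 2"
  shows "pd (\<lambda>t' s'. X t' s' \<mu>) 0 t s = 0"
proof -
  have "lie_bracket d_tau X t s \<mu> = 0" using assms by blast
  moreover have "pd (\<lambda>t' s'. d_tau t' s' \<mu>) \<nu> t s = 0" for \<nu>
    unfolding d_tau_def pd_def by simp
  ultimately show ?thesis
    unfolding lie_bracket_def by (simp add: sum_lessThan_2 d_tau_def)
qed

lemma tau_invariant_if_commutes_d_tau:
  assumes "C1_field X" "\<forall>t s. \<forall>\<mu><2. lie_bracket d_tau X t s \<mu> = 0" "\<mu> < 2"
  shows "X t s \<mu> = X t' s \<mu>"
proof -
  have "\<forall>x. ((\<lambda>x. X x s \<mu>) has_real_derivative 0) (at x)"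
    using C1_funD(4)[OF C1_field_component[OF assms(1,3)], of s]
    by (simp add: pd_tau_eq_0_if_commutes_d_tau[OF assms(2,3)])
  then show ?thesis by (rule DERIV_isconst_all)
qed

lemma future_timelike_null_components_pos:
  assumes "future_timelike a X"
  shows "X t s 0 - X t s 1 > 0" "X t s 0 + X t s 1 > 0"
proof -
  have "gprod a s (X t s) (X t s) < 0" "gprod a s (X t s) (d_tau t s) < 0"
    using assms unfolding future_timelike_def by auto
  then have "exp (2 * a * s) * ((X t s 1)\<^sup>2 - (X t s 0)\<^sup>2) < 0" "exp (2 * a * s) * X t s 0 > 0"
    unfolding gprod_def gmet_def eta_def d_tau_def
    by (simp_all add: sum_lessThan_2 power2_eq_square algebra_simps)
  then have "(X t s 1)\<^sup>2 < (X t s 0)\<^sup>2" "X t s 0 > 0"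
    by (simp_all add: mult_less_0_iff zero_less_mult_iff)
  then have "\<bar>X t s 1\<bar> < X t s 0"
    using power2_less_imp_less[of "\<bar>X t s 1\<bar>" "X t s 0"] by simp
  then show "X t s 0 - X t s 1 > 0" "X t s 0 + X t s 1 > 0" by auto
qed

lemma exp_decay_if_deriv_le:
  fixes f f' :: "real \<Rightarrow> real"
  assumes "\<rho> \<le> s"
    and "\<And>x. \<rho> \<le> x \<Longrightarrow> x \<le> s \<Longrightarrow> (f has_real_derivative f' x) (at x)"
    and "\<And>x. \<rho> \<le> x \<Longrightarrow> x \<le> s \<Longrightarrow> f' x \<le> - k * f x"
  shows "f s \<le> f \<rho> * exp (- k * (s - \<rho>))"
proof -
  define E where "E x = f x * exp (k * x)" for x
  have "E s \<le> E \<rho>"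
  proof (rule DERIV_nonpos_imp_nonincreasing[OF assms(1)])
    fix x assume x: "\<rho> \<le> x" "x \<le> s"
    have "(E has_real_derivative (f' x + k * f x) * exp (k * x)) (at x)"
      unfolding E_def by (auto intro!: derivative_eq_intros assms(2) x simp: algebra_simps)
    moreover have "(f' x + k * f x) * exp (k * x) \<le> 0"
      using assms(3)[OF x] by (intro mult_nonpos_nonneg) auto
    ultimately show "\<exists>y. (E has_real_derivative y) (at x) \<and> y \<le> 0" by blast
  qed
  then have "f s * exp (k * s) * exp (- k * s) \<le> f \<rho> * exp (k * \<rho>) * exp (- k * s)"
    unfolding E_def by (intro mult_right_mono) auto
  then show ?thesis
    by (simp add: mult.assoc exp_add[symmetric] algebra_simps)
qed

lemma redshift_null_component_decay:
  assumes N_C1: "C1_field N"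
    and N_commutes: "\<forall>t s. \<forall>\<mu><2. lie_bracket d_tau N t s \<mu> = 0"
    and redshift: "\<forall>\<phi> t s. s \<le> r0 \<longrightarrow> (a - \<epsilon>) * Jn a \<phi> N (n_Cv a) t s \<le> Kcur a \<phi> N t s"
    and "\<rho> \<le> s" "s \<le> r0"
  shows "N t s 0 - N t s 1 \<le> (N t \<rho> 0 - N t \<rho> 1) * exp (- (2 * (a - \<epsilon>)) * (s - \<rho>))"
proof -
  define D where "D \<mu> x = pd (\<lambda>t' s'. N t' s' \<mu>) 1 t x" for \<mu> x
  show ?thesis
  proof (rule exp_decay_if_deriv_le[OF \<open>\<rho> \<le> s\<close>])
    fix x
    show "((\<lambda>x. N t x 0 - N t x 1) has_real_derivative D 0 x - D 1 x) (at x)"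
      unfolding D_def
      using C1_funD(5)[OF C1_field_component[OF N_C1], of _ t x]
      by (auto intro!: derivative_eq_intros)
  next
    fix x assume x: "\<rho> \<le> x" "x \<le> s"
    define u where "u t s = t - s" for t s :: real
    have u: "pd u 0 t x = 1" "pd u 1 t x = -1"
      unfolding pd_def u_def by (auto intro!: DERIV_imp_deriv derivative_eq_intros)
    have J: "Jn a u N (n_Cv a) t x = 2 * (N t x 0 - N t x 1) * exp (-2 * a * x)"
      using Jn_n_Cv_eq[of a u N t x] unfolding u by (simp add: exp_minus field_simps)
    have K: "Kcur a u N t x = exp (-2 * a * x) * (D 1 x - D 0 x)"
      using Kcur_eq_if_pd_tau_eq_0[of N t x a u] pd_tau_eq_0_if_commutes_d_tau[OF N_commutes]
      unfolding u D_def by simp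
    have "(a - \<epsilon>) * Jn a u N (n_Cv a) t x \<le> Kcur a u N t x"
      using redshift x \<open>s \<le> r0\<close> by auto
    then have "exp (-2 * a * x) * ((a - \<epsilon>) * 2 * (N t x 0 - N t x 1))
        \<le> exp (-2 * a * x) * (D 1 x - D 0 x)"
      unfolding J K by (simp add: algebra_simps)
    then have "(a - \<epsilon>) * 2 * (N t x 0 - N t x 1) \<le> D 1 x - D 0 x"
      by (simp only: mult_le_cancel_left_pos[OF exp_gt_zero])
    then show "D 0 x - D 1 x \<le> - (2 * (a - \<epsilon>)) * (N t x 0 - N t x 1)"
      by (simp add: algebra_simps)
  qed
qed

section \<open>The wave equation in null coordinates\<close>

text \<open>Both sides are mean values of the same second difference
  \<open>f(t+h, s+h) - f(t+h, s) - f(t, s+h) + f(t, s)\<close>, taken in the two possible orders.\<close>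

lemma mixed_partials_mean_value:
  assumes C2: "C2_fun f" and h: "h > 0"
  obtains p q where "dist p (t, s) < 2 * h" "dist q (t, s) < 2 * h"
    "pd (pd f 0) 1 (fst p) (snd p) = pd (pd f 1) 0 (fst q) (snd q)"
proof -
  define P where "P = pd f 0"
  define Q where "Q = pd f 1"
  have Cf: "C1_fun f" and CP: "C1_fun P" and CQ: "C1_fun Q"
    using C2_funD[OF C2] unfolding P_def Q_def by auto
  define g1 where "g1 x = f x (s + h) - f x s" for x
  define g2 where "g2 y = f (t + h) y - f t y" for y
  have "\<exists>z. t < z \<and> z < t + h \<and> g1 (t + h) - g1 t = (t + h - t) * (P z (s + h) - P z s)"
    by (rule MVT2) (use h in \<open>auto simp: g1_def P_def intro!: derivative_eq_intros C1_funD(4)[OF Cf]\<close>)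
  then obtain \<xi> where \<xi>: "t < \<xi>" "\<xi> < t + h" "g1 (t + h) - g1 t = h * (P \<xi> (s + h) - P \<xi> s)"
    by auto
  have "\<exists>z. s < z \<and> z < s + h \<and> P \<xi> (s + h) - P \<xi> s = (s + h - s) * pd P 1 \<xi> z"
    by (rule MVT2) (use h C1_funD(5)[OF CP] in auto)
  then obtain \<eta> where \<eta>: "s < \<eta>" "\<eta> < s + h" "P \<xi> (s + h) - P \<xi> s = h * pd P 1 \<xi> \<eta>"
    by auto
  have "\<exists>z. s < z \<and> z < s + h \<and> g2 (s + h) - g2 s = (s + h - s) * (Q (t + h) z - Q t z)"
    by (rule MVT2) (use h in \<open>auto simp: g2_def Q_def intro!: derivative_eq_intros C1_funD(5)[OF Cf]\<close>)
  then obtain \<eta>' where \<eta>': "s < \<eta>'" "\<eta>' < s + h" "g2 (s + h) - g2 s = h * (Q (t + h) \<eta>' - Q t \<eta>')"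
    by auto
  have "\<exists>z. t < z \<and> z < t + h \<and> Q (t + h) \<eta>' - Q t \<eta>' = (t + h - t) * pd Q 0 z \<eta>'"
    by (rule MVT2) (use h C1_funD(4)[OF CQ] in auto)
  then obtain \<xi>' where \<xi>': "t < \<xi>'" "\<xi>' < t + h" "Q (t + h) \<eta>' - Q t \<eta>' = h * pd Q 0 \<xi>' \<eta>'"
    by auto
  have "g1 (t + h) - g1 t = g2 (s + h) - g2 s" unfolding g1_def g2_def by simp
  then have "h * (h * pd P 1 \<xi> \<eta>) = h * (h * pd Q 0 \<xi>' \<eta>')"
    using \<xi>(3) \<eta>(3) \<eta>'(3) \<xi>'(3) by simp
  then have eq: "pd P 1 \<xi> \<eta> = pd Q 0 \<xi>' \<eta>'" using h by simp
  have "dist (x, y) (t, s) < 2 * h" if "t < x" "x < t + h" "s < y" "y < s + h" for x y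
    using norm_Pair_le[of "x - t" "y - s"] that by (simp add: dist_norm)
  then show thesis
    using that[of "(\<xi>, \<eta>)" "(\<xi>', \<eta>')"] eq \<xi> \<eta> \<xi>' \<eta>' unfolding P_def Q_def by simp
qed

lemma pd_pd_commute:
  assumes C2: "C2_fun f"
  shows "pd (pd f 0) 1 t s = pd (pd f 1) 0 t s"
proof -
  define h where "h n = inverse (real (Suc n))" for n
  define R where "R n p q \<longleftrightarrow> dist p (t, s) < 2 * h n \<and> dist q (t, s) < 2 * h n \<and>
      pd (pd f 0) 1 (fst p) (snd p) = pd (pd f 1) 0 (fst q) (snd q)" for n p q
  have "\<forall>n. \<exists>p q. R n p q"
  proof
    fix n
    have "h n > 0" by (simp add: h_def)
    then obtain p q where "dist p (t, s) < 2 * h n" "dist q (t, s) < 2 * h n"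
      "pd (pd f 0) 1 (fst p) (snd p) = pd (pd f 1) 0 (fst q) (snd q)"
      by (rule mixed_partials_mean_value[OF C2])
    then show "\<exists>p q. R n p q"
      unfolding R_def by blast
  qed
  then obtain p q where pq: "\<And>n. R n (p n) (q n)" by metis
  have h0: "(\<lambda>n. 2 * h n) \<longlonglongrightarrow> 0"
    unfolding h_def using tendsto_mult_right_zero[OF LIMSEQ_inverse_real_of_nat] .
  have "(\<lambda>n. dist (p n) (t, s)) \<longlonglongrightarrow> 0" "(\<lambda>n. dist (q n) (t, s)) \<longlonglongrightarrow> 0"
    by (rule Lim_null_comparison[OF _ h0],
        use pq in \<open>auto simp: R_def less_imp_le intro!: always_eventually\<close>)+
  then have p_lim: "p \<longlonglongrightarrow> (t, s)" and q_lim: "q \<longlonglongrightarrow> (t, s)"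
    by (auto intro: tendsto_dist_iff[THEN iffD2])
  have "isCont (\<lambda>p. pd (pd f 0) 1 (fst p) (snd p)) (t, s)"
    "isCont (\<lambda>p. pd (pd f 1) 0 (fst p) (snd p)) (t, s)"
    using C1_funD(3)[OF C2_funD(2)[OF C2]] C1_funD(2)[OF C2_funD(3)[OF C2]]
    unfolding cont2_def continuous_on_eq_continuous_at[OF open_UNIV] by simp_all
  from isCont_tendsto_compose[OF this(1) p_lim] isCont_tendsto_compose[OF this(2) q_lim]
  have "(\<lambda>n. pd (pd f 0) 1 (fst (p n)) (snd (p n))) \<longlonglongrightarrow> pd (pd f 0) 1 t s"
    "(\<lambda>n. pd (pd f 0) 1 (fst (p n)) (snd (p n))) \<longlonglongrightarrow> pd (pd f 1) 0 t s"
    using pq by (simp_all add: R_def)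
  then show ?thesis by (rule LIMSEQ_unique)
qed

lemma has_real_derivative_diagonal:
  assumes C: "C1_fun f"
  shows "((\<lambda>h. f (t + h) (s + h)) has_real_derivative
           pd f 0 (t + h) (s + h) + pd f 1 (t + h) (s + h)) (at h)"
proof -
  define x where "x = t + h"
  define y where "y = s + h"
  have mult_left: "blinfun_apply (blinfun_mult_left c) = (*) c" for c :: real
    by (auto simp: fun_eq_iff mult.commute)
  have fx: "((\<lambda>x. f x y) has_derivative (*) (pd f 0 x y)) (at x within UNIV)"
    using C1_funD(4)[OF C, of y x] by (simp add: has_field_derivative_def)
  have fy: "((\<lambda>y. f x y) has_derivative blinfun_apply (blinfun_mult_left (pd f 1 x y)))
      (at y within UNIV)" for x y
    unfolding mult_left using C1_funD(5)[OF C, of x y] by (simp add: has_field_derivative_def)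
  have "continuous (at (x, y) within UNIV \<times> UNIV) (\<lambda>p. pd f 1 (fst p) (snd p))"
    using C1_funD(3)[OF C] unfolding cont2_def by (simp add: continuous_on_eq_continuous_at)
  from bounded_linear.continuous[OF bounded_linear_blinfun_mult_left this]
  have "continuous (at (x, y) within UNIV \<times> UNIV) (\<lambda>(x, y). blinfun_mult_left (pd f 1 x y))"
    by (simp add: case_prod_beta')
  from has_derivative_partialsI[OF fx fy this]
  have D: "((\<lambda>(x, y). f x y) has_derivative (\<lambda>(dx, dy). pd f 0 x y * dx + pd f 1 x y * dy)) (at (x, y))"
    unfolding mult_left by simp
  have G: "((\<lambda>h. (t + h, s + h)) has_derivative (\<lambda>k. (k, k))) (at h)"
    by (auto intro!: derivative_eq_intros)
  have "(((\<lambda>(x, y). f x y) \<circ> (\<lambda>h. (t + h, s + h))) has_derivative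
      ((\<lambda>(dx, dy). pd f 0 x y * dx + pd f 1 x y * dy) \<circ> (\<lambda>k. (k, k)))) (at h)"
    by (rule diff_chain_at[OF G]) (use D in \<open>simp add: x_def y_def\<close>)
  then have "((\<lambda>h. f (t + h) (s + h)) has_derivative (\<lambda>k. pd f 0 x y * k + pd f 1 x y * k)) (at h)"
    by (simp add: o_def)
  then show ?thesis
    by (rule has_derivative_imp_has_field_derivative) (simp add: x_def y_def algebra_simps)
qed

lemma sqrt_abs_gdet: "sqrt \<bar>gdet a s\<bar> = exp (2 * a * s)"
proof -
  have "gdet a s = - (exp (2 * a * s) * exp (2 * a * s))"
    unfolding gdet_def gmet_def eta_def by simp
  then show ?thesis by simp
qed

lemma box_g_eq:
  assumes "C1_fun (pd \<psi> 0)"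
  shows "box_g a \<psi> t s = exp (- (2 * a * s)) * (pd (pd \<psi> 1) 1 t s - pd (pd \<psi> 0) 0 t s)"
proof -
  have flux_tau: "(\<lambda>t' s'. sqrt \<bar>gdet a s'\<bar> * (\<Sum>\<nu><2. ginv a s' 0 \<nu> * pd \<psi> \<nu> t' s')) =
      (\<lambda>t' s'. - pd \<psi> 0 t' s')"
    and flux_r: "(\<lambda>t' s'. sqrt \<bar>gdet a s'\<bar> * (\<Sum>\<nu><2. ginv a s' 1 \<nu> * pd \<psi> \<nu> t' s')) =
      (\<lambda>t' s'. pd \<psi> 1 t' s')"
    by (auto simp: fun_eq_iff sqrt_abs_gdet sum_lessThan_2 ginv_def eta_def exp_add[symmetric])
  have "pd (\<lambda>t' s'. - pd \<psi> 0 t' s') 0 t s = - pd (pd \<psi> 0) 0 t s"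
    unfolding pd_def
    by (auto intro!: DERIV_imp_deriv derivative_eq_intros C1_funD(4)[OF assms, unfolded pd_def, simplified])
  then show ?thesis
    unfolding box_g_def sum_lessThan_2 flux_tau[unfolded sum_lessThan_2] flux_r[unfolded sum_lessThan_2]
    unfolding sqrt_abs_gdet
    by (simp add: exp_minus divide_inverse mult.commute)
qed

lemma wave_pd_u_transport:
  assumes C2: "C2_fun \<psi>" and wave: "\<forall>t s. box_g a \<psi> t s = 0"
  shows "pd \<psi> 0 (t + h) (s + h) - pd \<psi> 1 (t + h) (s + h) = pd \<psi> 0 t s - pd \<psi> 1 t s"
proof -
  have CP: "C1_fun (pd \<psi> 0)" and CQ: "C1_fun (pd \<psi> 1)" using C2_funD[OF C2] by auto
  have "pd (pd \<psi> 0) 0 x y = pd (pd \<psi> 1) 1 x y" for x y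
    using wave box_g_eq[OF CP, of a x y] by simp
  moreover have "((\<lambda>h. pd \<psi> 0 (t + h) (s + h) - pd \<psi> 1 (t + h) (s + h)) has_real_derivative
      (pd (pd \<psi> 0) 0 (t + x) (s + x) + pd (pd \<psi> 0) 1 (t + x) (s + x)) -
      (pd (pd \<psi> 1) 0 (t + x) (s + x) + pd (pd \<psi> 1) 1 (t + x) (s + x))) (at x)" for x
    by (intro DERIV_diff has_real_derivative_diagonal CP CQ)
  ultimately have "((\<lambda>h. pd \<psi> 0 (t + h) (s + h) - pd \<psi> 1 (t + h) (s + h)) has_real_derivative 0) (at x)"
    for x
    using pd_pd_commute[OF C2] by simp
  then show ?thesis
    using DERIV_isconst_all[of "\<lambda>h. pd \<psi> 0 (t + h) (s + h) - pd \<psi> 1 (t + h) (s + h)" h 0] by simp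
qed

section \<open>Domains of dependence\<close>

lemma causal_curve_from_tau_line: "causal_curve_from a False (\<lambda>x. (t - x, s)) (t, s)"
  unfolding causal_curve_from_def
proof (intro conjI exI[of _ "\<lambda>_. (-1, 0)"] allI impI)
  fix x :: real
  show "((\<lambda>x. (t - x, s)) has_vector_derivative (-1, 0)) (at x within {0..})"
    by (auto intro!: derivative_eq_intros)
  show "gprod a (snd (t - x, s)) (\<lambda>\<mu>. if \<mu> = 0 then fst (-1::real, 0::real) else snd (-1::real, 0::real))
      (\<lambda>\<mu>. if \<mu> = 0 then fst (-1::real, 0::real) else snd (-1::real, 0::real)) \<le> 0"
    unfolding gprod_def gmet_def eta_def by (simp add: sum_lessThan_2)
qed (auto simp: zero_prod_def)

lemma inextendible_tau_line: "inextendible (\<lambda>x. (t - x, s))"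
  unfolding inextendible_def
proof
  assume "\<exists>q. ((\<lambda>x. (t - x, s)) \<longlongrightarrow> q) at_top"
  then obtain q where "((\<lambda>x. t - x) \<longlongrightarrow> fst q) at_top"
    using tendsto_fst by fastforce
  then have "((\<lambda>x. x) \<longlongrightarrow> t - fst q) at_top"
    using tendsto_diff[OF tendsto_const[of t]] by fastforce
  then show False
    using not_tendsto_and_filterlim_at_infinity[OF trivial_limit_at_top_linorder]
      filterlim_at_top_imp_at_infinity[OF filterlim_ident]
    by blast
qed

lemma Dplus_Sigma_hyp_le_null_coordinate:
  assumes "(t, s) \<in> Dplus a (Sigma_hyp \<tau>0 r)" and "s \<le> r"
  shows "\<tau>0 + r \<le> t + s"
proof -
  obtain x where "x \<ge> 0" "(t - x, s) \<in> Sigma_hyp \<tau>0 r"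
    using assms(1) causal_curve_from_tau_line inextendible_tau_line unfolding Dplus_def by blast
  then show ?thesis
    using assms(2) unfolding Sigma_hyp_def vcoord_def ucoord_def by auto
qed

section \<open>Integration along null lines\<close>

lemma nn_integral_exp_decay_le:
  fixes c k \<rho> r :: real
  assumes c: "c \<ge> 0" and k: "k > 0"
  shows "(\<integral>\<^sup>+ s. ennreal (c * exp (- k * (s - \<rho>)) * indicator {\<rho>..r} s) \<partial>lborel) \<le> ennreal (c / k)"
proof (cases "\<rho> \<le> r")
  case True
  define F where "F s = - c / k * exp (- k * (s - \<rho>))" for s
  have restrict: "(\<lambda>s. c * exp (- k * (s - \<rho>)) * indicator {\<rho>..r} s) =
      (\<lambda>s. if s \<in> {\<rho>..r} then c * exp (- k * (s - \<rho>)) else 0)"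
    by (auto simp: fun_eq_iff)
  have "((\<lambda>s. c * exp (- k * (s - \<rho>))) has_integral (F r - F \<rho>)) {\<rho>..r}"
  proof (rule fundamental_theorem_of_calculus[OF True])
    fix x
    have "(F has_real_derivative (- c / k * (exp (- k * (x - \<rho>)) * (- k * 1)))) (at x within {\<rho>..r})"
      unfolding F_def by (auto intro!: derivative_eq_intros)
    then show "(F has_vector_derivative c * exp (- k * (x - \<rho>))) (at x within {\<rho>..r})"
      using k by (simp add: has_real_derivative_iff_has_vector_derivative[symmetric] field_simps)
  qed
  then have "((\<lambda>s. c * exp (- k * (s - \<rho>)) * indicator {\<rho>..r} s) has_integral (F r - F \<rho>)) UNIV"
    unfolding restrict has_integral_restrict_UNIV .
  then have "(\<integral>\<^sup>+ s. ennreal (c * exp (- k * (s - \<rho>)) * indicator {\<rho>..r} s) \<partial>lborel) = ennreal (F r - F \<rho>)"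
    by (intro nn_integral_has_integral_lborel) (use c in \<open>auto simp: indicator_def\<close>)
  also have "F r - F \<rho> \<le> c / k"
    unfolding F_def using c k by (simp add: field_simps)
  finally show ?thesis by (simp add: ennreal_leI)
qed simp

lemma nn_integral_decay_fibre_le:
  fixes Nu :: "real \<Rightarrow> real"
  assumes "Nu \<rho> \<ge> 0" "w \<ge> 0" "k > 0"
    and decay: "\<And>s. \<rho> \<le> s \<Longrightarrow> s \<le> r \<Longrightarrow> Nu s \<le> Nu \<rho> * exp (- k * (s - \<rho>))"
  shows "(\<integral>\<^sup>+ s. ennreal (Nu s * w) * indicator {\<rho>..r} s \<partial>lborel) \<le> ennreal (Nu \<rho> * w / k)"
proof -
  have "ennreal (Nu s * w) * indicator {\<rho>..r} s
      \<le> ennreal (Nu \<rho> * w * exp (- k * (s - \<rho>)) * indicator {\<rho>..r} s)" for s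
  proof (cases "s \<in> {\<rho>..r}")
    case True
    then have "Nu s * w \<le> Nu \<rho> * exp (- k * (s - \<rho>)) * w"
      using decay \<open>w \<ge> 0\<close> by (intro mult_right_mono) auto
    then show ?thesis
      using True by (auto intro!: ennreal_leI simp: algebra_simps)
  qed simp
  then have "(\<integral>\<^sup>+ s. ennreal (Nu s * w) * indicator {\<rho>..r} s \<partial>lborel)
      \<le> (\<integral>\<^sup>+ s. ennreal (Nu \<rho> * w * exp (- k * (s - \<rho>)) * indicator {\<rho>..r} s) \<partial>lborel)"
    by (rule nn_integral_mono)
  also have "\<dots> \<le> ennreal (Nu \<rho> * w / k)"
    using assms by (intro nn_integral_exp_decay_le) auto
  finally show ?thesis .
qed

lemma nn_integral_lborel_shear:
  fixes f :: "real \<times> real \<Rightarrow> ennreal"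
  assumes [measurable]: "f \<in> borel_measurable borel"
  shows "(\<integral>\<^sup>+ p. f p \<partial>lborel) = (\<integral>\<^sup>+ \<rho>. (\<integral>\<^sup>+ s. f (s - \<rho> + c, s) \<partial>lborel) \<partial>lborel)"
proof -
  have "(\<integral>\<^sup>+ p. f p \<partial>lborel) = (\<integral>\<^sup>+ s. (\<integral>\<^sup>+ t. f (t, s) \<partial>lborel) \<partial>lborel)"
    using lborel_pair.nn_integral_snd[of f] by (simp add: lborel_prod)
  also have "\<dots> = (\<integral>\<^sup>+ s. (\<integral>\<^sup>+ \<rho>. f (s - \<rho> + c, s) \<partial>lborel) \<partial>lborel)"
  proof (rule nn_integral_cong)
    fix s :: real
    show "(\<integral>\<^sup>+ t. f (t, s) \<partial>lborel) = (\<integral>\<^sup>+ \<rho>. f (s - \<rho> + c, s) \<partial>lborel)"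
      using nn_integral_real_affine[of "\<lambda>t. f (t, s)" "-1" "s + c"] by (simp add: algebra_simps)
  qed
  also have "\<dots> = (\<integral>\<^sup>+ \<rho>. (\<integral>\<^sup>+ s. f (s - \<rho> + c, s) \<partial>lborel) \<partial>lborel)"
    using lborel_pair.Fubini[of "\<lambda>(\<rho>, s). f (s - \<rho> + c, s)"] by simp
  finally show ?thesis .
qed

lemma nn_integral_null_strip_le:
  fixes Nu W :: "real \<Rightarrow> real" and k r \<tau>0 :: real
  assumes [measurable]: "Nu \<in> borel_measurable borel" "W \<in> borel_measurable borel"
    and Nu_nonneg: "\<And>s. Nu s \<ge> 0" and W_nonneg: "\<And>\<rho>. W \<rho> \<ge> 0" and k: "k > 0"
    and decay: "\<And>\<rho> s. \<rho> \<le> s \<Longrightarrow> s \<le> r \<Longrightarrow> Nu s \<le> Nu \<rho> * exp (- k * (s - \<rho>))"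
  shows "(\<integral>\<^sup>+ p. ennreal (Nu (snd p) * W (snd p - fst p + \<tau>0))
            * indicator {p. snd p \<le> r \<and> \<tau>0 + r \<le> fst p + snd p} p \<partial>lborel)
     \<le> (\<integral>\<^sup>+ \<rho>. ennreal (Nu \<rho> * W \<rho> / k) \<partial>lborel)"
proof -
  define S where "S = {p :: real \<times> real. snd p \<le> r \<and> \<tau>0 + r \<le> fst p + snd p}"
  have "closed S"
    unfolding S_def by (intro closed_Collect_conj closed_Collect_le continuous_intros)
  then have [measurable]: "S \<in> sets borel"
    by (rule borel_closed)
  have "snd \<in> borel_measurable (borel :: (real \<times> real) measure)"
    "(\<lambda>p::real \<times> real. snd p - fst p + \<tau>0) \<in> borel_measurable borel"
    by (intro borel_measurable_continuous_onI continuous_intros)+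
  from measurable_comp[OF this(1) assms(1)] measurable_comp[OF this(2) assms(2)]
  have [measurable]: "(\<lambda>p::real \<times> real. Nu (snd p)) \<in> borel_measurable borel"
    "(\<lambda>p::real \<times> real. W (snd p - fst p + \<tau>0)) \<in> borel_measurable borel"
    by (simp_all add: o_def)
  have "(\<lambda>p. ennreal (Nu (snd p) * W (snd p - fst p + \<tau>0)) * indicator S p) \<in> borel_measurable borel"
    by measurable
  from nn_integral_lborel_shear[OF this, of \<tau>0]
  have "(\<integral>\<^sup>+ p. ennreal (Nu (snd p) * W (snd p - fst p + \<tau>0)) * indicator S p \<partial>lborel)
      = (\<integral>\<^sup>+ \<rho>. (\<integral>\<^sup>+ s. ennreal (Nu s * W \<rho>) * indicator S (s - \<rho> + \<tau>0, s) \<partial>lborel) \<partial>lborel)"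
    by simp
  also have "\<dots> \<le> (\<integral>\<^sup>+ \<rho>. ennreal (Nu \<rho> * W \<rho> / k) \<partial>lborel)"
  proof (rule nn_integral_mono)
    fix \<rho> :: real
    have "(\<integral>\<^sup>+ s. ennreal (Nu s * W \<rho>) * indicator S (s - \<rho> + \<tau>0, s) \<partial>lborel)
        \<le> (\<integral>\<^sup>+ s. ennreal (Nu s * W \<rho>) * indicator {\<rho>..r} s \<partial>lborel)"
      by (intro nn_integral_mono mult_left_mono) (auto simp: S_def indicator_def)
    also have "\<dots> \<le> ennreal (Nu \<rho> * W \<rho> / k)"
      using Nu_nonneg W_nonneg k decay by (rule nn_integral_decay_fibre_le)
    finally show "(\<integral>\<^sup>+ s. ennreal (Nu s * W \<rho>) * indicator S (s - \<rho> + \<tau>0, s) \<partial>lborel)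
        \<le> ennreal (Nu \<rho> * W \<rho> / k)" .
  qed
  finally show ?thesis
    unfolding S_def .
qed

lemma continuous_on_Jn_n_Sigma:
  assumes "C1_fun \<psi>" "C1_field X"
  shows "continuous_on UNIV (\<lambda>s. Jn a \<psi> X (n_Sigma a) t s * exp (a * s))"
proof -
  have "continuous_on UNIV (\<lambda>s. pd \<psi> 0 t s)" "continuous_on UNIV (\<lambda>s. pd \<psi> 1 t s)"
    "continuous_on UNIV (\<lambda>s. X t s 0)" "continuous_on UNIV (\<lambda>s. X t s 1)"
    using C1_funD(1-3)[OF assms(1)] C1_funD(1)[OF C1_field_component[OF assms(2)]]
    by (auto intro: continuous_on_cont2_slice)
  then show ?thesis
    unfolding Jn_n_Sigma_eq by (intro continuous_intros) auto
qed

lemma null_part_le_Jn_n_Sigma: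
  assumes "future_timelike a X"
  shows "(X t s 0 - X t s 1) * (pd \<phi> 0 t s - pd \<phi> 1 t s)\<^sup>2 / 4 \<le> Jn a \<phi> X (n_Sigma a) t s * exp (a * s)"
  unfolding Jn_n_Sigma_eq
  using future_timelike_null_components_pos[OF assms, of t s] by simp

lemma Jn_n_Cv_eq_initial_null_data:
  assumes C2: "C2_fun \<psi>" and wave: "\<forall>t s. box_g a \<psi> t s = 0"
    and N_C1: "C1_field N" and N_commutes: "\<forall>t s. \<forall>\<mu><2. lie_bracket d_tau N t s \<mu> = 0"
  shows "Jn a \<psi> N (n_Cv a) t s * exp (2 * a * s) =
    (N \<tau>0 s 0 - N \<tau>0 s 1) * ((pd \<psi> 0 \<tau>0 (s - t + \<tau>0) - pd \<psi> 1 \<tau>0 (s - t + \<tau>0))\<^sup>2 / 2)"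
proof -
  have "pd \<psi> 0 t s - pd \<psi> 1 t s = pd \<psi> 0 \<tau>0 (s - t + \<tau>0) - pd \<psi> 1 \<tau>0 (s - t + \<tau>0)"
    using wave_pd_u_transport[OF C2 wave, where t = \<tau>0 and s = "s - t + \<tau>0" and h = "t - \<tau>0"] by simp
  moreover have "N t s \<mu> = N \<tau>0 s \<mu>" if "\<mu> < 2" for \<mu>
    using tau_invariant_if_commutes_d_tau[OF N_C1 N_commutes that] .
  ultimately show ?thesis
    unfolding Jn_n_Cv_eq by simp
qed

lemma region_flux_le_strip_integral:
  assumes C2: "C2_fun \<psi>" and wave: "\<forall>t s. box_g a \<psi> t s = 0"
    and N_C1: "C1_field N" and N_commutes: "\<forall>t s. \<forall>\<mu><2. lie_bracket d_tau N t s \<mu> = 0"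
  shows "(\<integral>\<^sup>+ p \<in> Dplus a (Sigma_hyp \<tau>0 r) \<inter> D \<inter> {p. snd p \<le> r}.
            ennreal (Jn a \<psi> N (n_Cv a) (fst p) (snd p) * exp (2 * a * snd p)) \<partial>lborel)
    \<le> (\<integral>\<^sup>+ p. ennreal ((N \<tau>0 (snd p) 0 - N \<tau>0 (snd p) 1) *
            ((pd \<psi> 0 \<tau>0 (snd p - fst p + \<tau>0) - pd \<psi> 1 \<tau>0 (snd p - fst p + \<tau>0))\<^sup>2 / 2))
          * indicator {p. snd p \<le> r \<and> \<tau>0 + r \<le> fst p + snd p} p \<partial>lborel)"
proof (rule nn_integral_mono)
  fix p :: "real \<times> real"
  obtain t s where p: "p = (t, s)" by fastforce
  show "ennreal (Jn a \<psi> N (n_Cv a) (fst p) (snd p) * exp (2 * a * snd p))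
        * indicator (Dplus a (Sigma_hyp \<tau>0 r) \<inter> D \<inter> {p. snd p \<le> r}) p
      \<le> ennreal ((N \<tau>0 (snd p) 0 - N \<tau>0 (snd p) 1) *
            ((pd \<psi> 0 \<tau>0 (snd p - fst p + \<tau>0) - pd \<psi> 1 \<tau>0 (snd p - fst p + \<tau>0))\<^sup>2 / 2))
          * indicator {p. snd p \<le> r \<and> \<tau>0 + r \<le> fst p + snd p} p"
    using Dplus_Sigma_hyp_le_null_coordinate[of t s a \<tau>0 r]
    by (auto simp: p indicator_def Jn_n_Cv_eq_initial_null_data[OF C2 wave N_C1 N_commutes, of _ _ \<tau>0])
qed

lemma null_energy_le_Sigma_energy:
  assumes "C1_fun \<psi>" "C1_field X" "future_timelike a X" "k > 0"
  shows "(\<integral>\<^sup>+ \<rho>. ennreal ((X \<tau>0 \<rho> 0 - X \<tau>0 \<rho> 1) * ((pd \<psi> 0 \<tau>0 \<rho> - pd \<psi> 1 \<tau>0 \<rho>)\<^sup>2 / 2) / k) \<partial>lborel)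
    \<le> ennreal (2 / k) * (\<integral>\<^sup>+ s. ennreal (Jn a \<psi> X (n_Sigma a) \<tau>0 s * exp (a * s)) \<partial>lborel)"
proof -
  have [measurable]: "(\<lambda>s. Jn a \<psi> X (n_Sigma a) \<tau>0 s * exp (a * s)) \<in> borel_measurable borel"
    using continuous_on_Jn_n_Sigma[OF assms(1,2)] by (rule borel_measurable_continuous_onI)
  have "(\<integral>\<^sup>+ \<rho>. ennreal ((X \<tau>0 \<rho> 0 - X \<tau>0 \<rho> 1) * ((pd \<psi> 0 \<tau>0 \<rho> - pd \<psi> 1 \<tau>0 \<rho>)\<^sup>2 / 2) / k) \<partial>lborel)
      \<le> (\<integral>\<^sup>+ s. ennreal (2 / k * (Jn a \<psi> X (n_Sigma a) \<tau>0 s * exp (a * s))) \<partial>lborel)"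
  proof (intro nn_integral_mono ennreal_leI)
    fix s
    have "(X \<tau>0 s 0 - X \<tau>0 s 1) * ((pd \<psi> 0 \<tau>0 s - pd \<psi> 1 \<tau>0 s)\<^sup>2 / 2) / k
        = 2 / k * ((X \<tau>0 s 0 - X \<tau>0 s 1) * (pd \<psi> 0 \<tau>0 s - pd \<psi> 1 \<tau>0 s)\<^sup>2 / 4)"
      using \<open>k > 0\<close> by (simp add: field_simps)
    also have "\<dots> \<le> 2 / k * (Jn a \<psi> X (n_Sigma a) \<tau>0 s * exp (a * s))"
      using null_part_le_Jn_n_Sigma[OF assms(3)] \<open>k > 0\<close> by (intro mult_left_mono) auto
    finally show "(X \<tau>0 s 0 - X \<tau>0 s 1) * ((pd \<psi> 0 \<tau>0 s - pd \<psi> 1 \<tau>0 s)\<^sup>2 / 2) / k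
        \<le> 2 / k * (Jn a \<psi> X (n_Sigma a) \<tau>0 s * exp (a * s))" .
  qed
  also have "\<dots> = (\<integral>\<^sup>+ s. ennreal (2 / k) * ennreal (Jn a \<psi> X (n_Sigma a) \<tau>0 s * exp (a * s)) \<partial>lborel)"
    using \<open>k > 0\<close> by (intro nn_integral_cong ennreal_mult') simp
  also have "\<dots> = ennreal (2 / k) * (\<integral>\<^sup>+ s. ennreal (Jn a \<psi> X (n_Sigma a) \<tau>0 s * exp (a * s)) \<partial>lborel)"
    by (rule nn_integral_cmult) measurable
  finally show ?thesis .
qed

lemma redshift_region_flux_le_initial_energy:
  assumes C2: "C2_fun \<psi>" and wave: "\<forall>t s. box_g a \<psi> t s = 0"
    and N_C1: "C1_field N" and N_timelike: "future_timelike a N"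
    and N_commutes: "\<forall>t s. \<forall>\<mu><2. lie_bracket d_tau N t s \<mu> = 0"
    and redshift: "\<forall>\<phi> t s. s \<le> r0 \<longrightarrow> (a - \<epsilon>) * Jn a \<phi> N (n_Cv a) t s \<le> Kcur a \<phi> N t s"
    and eps_lt: "\<epsilon> < a" and "r \<le> r0"
  shows "(\<integral>\<^sup>+ p \<in> Dplus a (Sigma_hyp \<tau>0 r) \<inter> D \<inter> {p. snd p \<le> r}.
            ennreal (Jn a \<psi> N (n_Cv a) (fst p) (snd p) * exp (2 * a * snd p)) \<partial>lborel)
    \<le> ennreal (1 / (a - \<epsilon>)) * (\<integral>\<^sup>+ s. ennreal (Jn a \<psi> N (n_Sigma a) \<tau>0 s * exp (a * s)) \<partial>lborel)"
    (is "?flux \<le> _ * ?energy")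
proof -
  define k where "k = 2 * (a - \<epsilon>)"
  have k: "k > 0" using eps_lt by (simp add: k_def)
  define Nu where "Nu s = N \<tau>0 s 0 - N \<tau>0 s 1" for s
  define W where "W \<rho> = (pd \<psi> 0 \<tau>0 \<rho> - pd \<psi> 1 \<tau>0 \<rho>)\<^sup>2 / 2" for \<rho>
  have "continuous_on UNIV Nu" "continuous_on UNIV W"
    using C1_funD(1-3)[OF C2_funD(1)[OF C2]] C1_funD(1)[OF C1_field_component[OF N_C1]]
    unfolding Nu_def W_def by (intro continuous_intros continuous_on_cont2_slice; simp)+
  then have measurable: "Nu \<in> borel_measurable borel" "W \<in> borel_measurable borel"
    by (auto intro: borel_measurable_continuous_onI)
  have nonneg: "Nu s \<ge> 0" "W s \<ge> 0" for s
    using future_timelike_null_components_pos[OF N_timelike] by (simp_all add: Nu_def W_def less_imp_le)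
  have decay: "Nu s \<le> Nu \<rho> * exp (- k * (s - \<rho>))" if "\<rho> \<le> s" "s \<le> r" for \<rho> s
    using redshift_null_component_decay[OF N_C1 N_commutes redshift that(1)] that(2) \<open>r \<le> r0\<close>
    by (simp add: Nu_def k_def)
  have "?flux \<le> (\<integral>\<^sup>+ p. ennreal (Nu (snd p) * W (snd p - fst p + \<tau>0))
            * indicator {p. snd p \<le> r \<and> \<tau>0 + r \<le> fst p + snd p} p \<partial>lborel)"
    using region_flux_le_strip_integral[OF C2 wave N_C1 N_commutes] unfolding Nu_def W_def .
  also have "\<dots> \<le> (\<integral>\<^sup>+ \<rho>. ennreal (Nu \<rho> * W \<rho> / k) \<partial>lborel)"
    using measurable nonneg k decay by (rule nn_integral_null_strip_le)
  also have "\<dots> \<le> ennreal (2 / k) * ?energy"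
    using null_energy_le_Sigma_energy[OF C2_funD(1)[OF C2] N_C1 N_timelike k] unfolding Nu_def W_def .
  also have "2 / k = 1 / (a - \<epsilon>)"
    using eps_lt by (simp add: k_def field_simps)
  finally show ?thesis .
qed

theorem proposition4p3:
  fixes a \<epsilon> r0 R c CN CK :: real
    and N :: "real \<Rightarrow> real \<Rightarrow> nat \<Rightarrow> real"
    and rt0 rt1 :: real
  assumes a_pos: "a > 0"
    and eps_pos: "\<epsilon> > 0" and eps_lt: "\<epsilon> < a"
    and N_C1: "C1_field N"
    and N_timelike: "future_timelike a N"
    and N_commutes: "\<forall>t s. \<forall>\<mu><2. lie_bracket d_tau N t s \<mu> = 0"
    and r0_R: "r0 < R" and c_pos: "c > 0" and CN_pos: "CN > 0" and CK_pos: "CK > 0"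
    and redshift: "\<forall>\<phi> t s. s \<le> r0 \<longrightarrow>
        (a - \<epsilon>) * Jn a \<phi> N (n_Cv a) t s \<le> Kcur a \<phi> N t s"
    and compar: "\<forall>\<phi> t s. r0 \<le> s \<and> s \<le> R \<longrightarrow>
        c * Jn a \<phi> d_tau (n_Sigma a) t s \<le> Jn a \<phi> N (n_Sigma a) t s \<and>
        Jn a \<phi> N (n_Sigma a) t s \<le> CN * Jn a \<phi> d_tau (n_Sigma a) t s"
    and far: "\<forall>\<phi> t s. s \<ge> R \<longrightarrow> Jn a \<phi> N (n_Cu a) t s = Jn a \<phi> d_tau (n_Cu a) t s"
    and Kbound: "\<forall>\<phi> t s. r0 \<le> s \<and> s \<le> R \<longrightarrow>
        \<bar>Kcur a \<phi> N t s\<bar> \<le> CK * Jn a \<phi> d_tau (n_Sigma a) t s"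
    and rt: "rt0 < rt1" "rt1 < r0"
  shows "\<exists>C::real. \<forall>(\<psi>::real \<Rightarrow> real \<Rightarrow> real) \<tau>0 \<tau>1 rstar.
     C2_fun \<psi> \<and> (\<forall>t s. box_g a \<psi> t s = 0) \<and>
     (\<exists>\<tau>d K. compact K \<and> (\<forall>s. (Ucoord a \<tau>d s, Vcoord a \<tau>d s) \<notin> K \<longrightarrow>
                              \<psi> \<tau>d s = 0 \<and> pd \<psi> 0 \<tau>d s = 0)) \<and>
     \<tau>0 < \<tau>1 \<and> rt0 < rstar \<and> rstar < rt1 \<and>
     (let g = (\<lambda>rb. integral {\<tau>0..\<tau>1} (\<lambda>t. Jn a \<psi> N (n_S a) t rb * exp (a * rb)))
      in g rstar = 1 / (rt1 - rt0) * integral {rt0..rt1} g)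
     \<longrightarrow>
     (\<integral>\<^sup>+ p \<in> (Dplus a (Sigma_hyp \<tau>0 rstar) \<inter> Dminus a (Sigma_hyp \<tau>1 rstar)
                  \<inter> {p. snd p \<le> rstar}).
         ennreal (Jn a \<psi> N (n_Cv a) (fst p) (snd p) * exp (2 * a * snd p)) \<partial>lborel)
     \<le> ennreal C * (\<integral>\<^sup>+ s. ennreal (Jn a \<psi> N (n_Sigma a) \<tau>0 s * exp (a * s)) \<partial>lborel)"
  by (intro exI[of _ "1 / (a - \<epsilon>)"] allI impI, elim conjE,
      rule redshift_region_flux_le_initial_energy[OF _ _ N_C1 N_timelike N_commutes redshift eps_lt])
     (use rt in auto)

end
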